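(* Let $r\ge 2$ and $p\ge (2r-1)r+2(r-1)$ be integers. Then $C_r(n,K_p^{(r)})=\Omega\!\left(n^{\frac{r}{r+1}}\right)$ as $n\to\infty$.
   Context: An $r$-graph is an $r$-uniform hypergraph; $K_n^{(r)}$ is the complete $r$-graph on $n$ vertices. A copy of an $r$-graph $H$ in $K_n^{(r)}$ is a subhypergraph isomorphic to $H$. An $(n,r,H)$-local coloring with $k$ colors is a family of edge-colorings $f_v:E(K_n^{(r)})\to[k]$, one per vertex $v$, such that for every copy $T$ of $H$ there is $u\in V(T)$ with $f_u$ injective on $E(T)$ (i.e. $T$ is rainbow under $f_u$). $C_r(n,H)$ is the minimum such $k$. *)

theory Defs
  imports Complex_Main
begin

text \<open>A copy of K_p^(r) is determined by its p-element vertex set S, its edges being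
  all r-subsets of S. A local colouring with k colours assigns to each vertex v
  a colouring f v of the edges with colours in {1..k}.\<close>

definition clique_local_coloring ::
  "nat \<Rightarrow> nat \<Rightarrow> nat \<Rightarrow> nat \<Rightarrow> (nat \<Rightarrow> nat set \<Rightarrow> nat) \<Rightarrow> bool" where
  "clique_local_coloring n r p k f \<longleftrightarrow>
     (\<forall>v<n. \<forall>e. e \<subseteq> {..<n} \<and> card e = r \<longrightarrow> f v e \<in> {1..k}) \<and>
     (\<forall>S. S \<subseteq> {..<n} \<and> card S = p \<longrightarrow>
        (\<exists>u\<in>S. inj_on (f u) {e. e \<subseteq> S \<and> card e = r}))"

definition C_clique :: "nat \<Rightarrow> nat \<Rightarrow> nat \<Rightarrow> nat" where
  "C_clique r n p = (LEAST k. \<exists>f. clique_local_coloring n r p k f)"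

end

theory Submission
  imports Defs
begin

text \<open>
  Fix the core \<open>T = {..<r - 2}\<close>. Every vertex \<open>u \<notin> T\<close> colours the other vertices
  \<open>x \<notin> T\<close> by \<open>f u (T \<union> {u, x})\<close>; as only \<open>k\<close> colours are available, double counting
  yields \<open>x \<noteq> y\<close> and a set \<open>H\<close> of \<open>m\<close> vertices \<open>u\<close> that see \<open>T \<union> {u, x}\<close> and
  \<open>T \<union> {u, y}\<close> in the same colour, as soon as \<open>4 k m \<le> n - r + 1\<close>. If moreover
  \<open>r k < m choose r\<close>, the pigeonhole principle gives an \<open>r\<close>-subset of \<open>H\<close> whose colour
  is repeated inside \<open>H\<close> under each of the \<open>r\<close> colourings \<open>f w\<close>, \<open>w \<in> T \<union> {x, y}\<close>.
  Padding \<open>T \<union> {x, y}\<close>, this subset and its repetitions with vertices of \<open>H\<close> gives a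
  \<open>p\<close>-clique that is rainbow for none of its vertices. So for \<open>m \<approx> n powr (1 / (r + 1))\<close>
  either \<open>k > (n - r + 1) / (4 m)\<close> or \<open>m choose r \<le> r k\<close>, and both force
  \<open>k \<ge> c n powr (r / (r + 1))\<close>.
\<close>

lemma card_monochromatic_pairs_ge:
  fixes G :: "'a \<Rightarrow> 'c"
  assumes fin: "finite A" and colours: "card (G ` A) \<le> k" and big: "4 * k * m \<le> card A"
  shows "m * card A \<le> card {(x, y) \<in> A \<times> A. x \<noteq> y \<and> G x = G y}"
proof -
  define cls where "cls c = {x \<in> A. G x = c}" for c
  define Small where "Small = {x \<in> A. card (cls (G x)) \<le> 2 * m}"
  define Few where "Few = {c \<in> G ` A. card (cls c) \<le> 2 * m}"
  have "Small = (\<Union>c \<in> Few. cls c)"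
    by (auto simp: Small_def Few_def cls_def)
  then have "card Small \<le> (\<Sum>c \<in> Few. card (cls c))"
    by (simp add: card_UN_le Few_def fin)
  also have "\<dots> \<le> (\<Sum>c \<in> Few. 2 * m)"
    by (rule sum_mono) (simp add: Few_def)
  also have "\<dots> \<le> 2 * k * m"
    using colours card_mono[of "G ` A" Few] fin by (simp add: Few_def)
  finally have card_Small: "card Small \<le> 2 * k * m" .
  have "card A \<le> 2 * card (A - Small)"
    using card_Small big card_Diff_subset[of Small A] fin card_mono[of A Small]
    by (auto simp: Small_def)
  have large_class: "2 * m \<le> card {y \<in> A. x \<noteq> y \<and> G x = G y}" if "x \<in> A - Small" for x
  proof -
    have "{y \<in> A. x \<noteq> y \<and> G x = G y} = cls (G x) - {x}"
      by (auto simp: cls_def)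
    moreover have "x \<in> cls (G x)" "finite (cls (G x))" "2 * m < card (cls (G x))"
      using that fin by (auto simp: cls_def Small_def)
    ultimately show ?thesis
      by simp
  qed
  have pairs: "{(x, y) \<in> A \<times> A. x \<noteq> y \<and> G x = G y} = Sigma A (\<lambda>x. {y \<in> A. x \<noteq> y \<and> G x = G y})"
    by auto
  have "m * card A \<le> card (A - Small) * (2 * m)"
    using \<open>card A \<le> 2 * card (A - Small)\<close> by (simp add: mult.commute mult.left_commute)
  also have "\<dots> \<le> (\<Sum>x \<in> A - Small. card {y \<in> A. x \<noteq> y \<and> G x = G y})"
    using sum_mono[of "A - Small" "\<lambda>_. 2 * m", OF large_class] by simp
  also have "\<dots> \<le> (\<Sum>x \<in> A. card {y \<in> A. x \<noteq> y \<and> G x = G y})"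
    by (rule sum_mono2) (auto simp: fin)
  also have "\<dots> = card {(x, y) \<in> A \<times> A. x \<noteq> y \<and> G x = G y}"
    unfolding pairs using fin by simp
  finally show ?thesis .
qed

lemma ex_pair_many_equal_colours:
  fixes g :: "'a \<Rightarrow> 'a \<Rightarrow> 'c"
  assumes fin: "finite L" and two: "2 \<le> card L" and m: "1 \<le> m"
    and colours: "\<forall>u \<in> L. card (g u ` (L - {u})) \<le> k"
    and big: "4 * k * m \<le> card L - 1"
  shows "\<exists>x \<in> L. \<exists>y \<in> L. x \<noteq> y \<and> m \<le> card {u \<in> L. u \<noteq> x \<and> u \<noteq> y \<and> g u x = g u y}"
proof (rule ccontr)
  assume few: "\<not> ?thesis"
  define D where "D = Sigma L (\<lambda>x. L - {x})"
  define R where "R u xy \<longleftrightarrow> u \<noteq> fst xy \<and> u \<noteq> snd xy \<and> g u (fst xy) = g u (snd xy)" for u xy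
  have finD: "finite D"
    using fin by (simp add: D_def)
  have lower: "m * (card L - 1) \<le> card {xy \<in> D. R u xy}" if u: "u \<in> L" for u
  proof -
    have "{xy \<in> D. R u xy} = {(x, y) \<in> (L - {u}) \<times> (L - {u}). x \<noteq> y \<and> g u x = g u y}"
      by (auto simp: D_def R_def)
    moreover have "card (L - {u}) = card L - 1"
      using fin u by simp
    ultimately show ?thesis
      using card_monochromatic_pairs_ge[of "L - {u}" "g u" k m] fin colours big u by simp
  qed
  have upper: "card {u \<in> L. R u xy} \<le> m - 1" if "xy \<in> D" for xy
    using few that by (force simp: D_def R_def)
  have "card L * (m * (card L - 1)) \<le> (\<Sum>u \<in> L. card {xy \<in> D. R u xy})"
    using sum_mono[of L "\<lambda>_. m * (card L - 1)", OF lower] by simp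
  also have "\<dots> = (\<Sum>xy \<in> D. card {u \<in> L. R u xy})"
    by (rule sum_multicount_gen) (auto simp: fin finD)
  also have "\<dots> \<le> card D * (m - 1)"
    using sum_mono[of D _ "\<lambda>_. m - 1", OF upper] by simp
  also have "card D = card L * (card L - 1)"
    using fin by (simp add: D_def)
  finally have "m * (card L - 1) \<le> (card L - 1) * (m - 1)"
    using two by (simp add: mult.assoc)
  then show False
    using two m by (simp add: mult.commute)
qed

lemma card_uniquely_coloured_le:
  assumes "finite E"
  shows "card {e \<in> E. \<forall>e' \<in> E. f e' = f e \<longrightarrow> e' = e} \<le> card (f ` E)"
proof (rule card_inj_on_le)
  show "inj_on f {e \<in> E. \<forall>e' \<in> E. f e' = f e \<longrightarrow> e' = e}"
    by (rule inj_onI) blast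
  show "f ` {e \<in> E. \<forall>e' \<in> E. f e' = f e \<longrightarrow> e' = e} \<subseteq> f ` E" "finite (f ` E)"
    using assms by auto
qed

lemma ex_colour_repeated_for_all:
  fixes f :: "'w \<Rightarrow> 'a \<Rightarrow> 'c"
  assumes finW: "finite W" and finE: "finite E"
    and colours: "\<forall>w \<in> W. card (f w ` E) \<le> k" and many: "card W * k < card E"
  shows "\<exists>e \<in> E. \<forall>w \<in> W. \<exists>e' \<in> E. e' \<noteq> e \<and> f w e' = f w e"
proof -
  define Unique where "Unique w = {e \<in> E. \<forall>e' \<in> E. f w e' = f w e \<longrightarrow> e' = e}" for w
  have "card (\<Union>w \<in> W. Unique w) \<le> (\<Sum>w \<in> W. card (Unique w))"
    using finW by (rule card_UN_le)
  also have "\<dots> \<le> (\<Sum>w \<in> W. k)"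
  proof (rule sum_mono)
    fix w
    assume "w \<in> W"
    have "card (Unique w) \<le> card (f w ` E)"
      unfolding Unique_def by (rule card_uniquely_coloured_le[OF finE])
    then show "card (Unique w) \<le> k"
      using colours \<open>w \<in> W\<close> by (meson order_trans)
  qed
  also have "\<dots> = card W * k"
    by simp
  finally have fewer: "card (\<Union>w \<in> W. Unique w) < card E"
    using many by linarith
  have "\<not> E \<subseteq> (\<Union>w \<in> W. Unique w)"
  proof
    assume "E \<subseteq> (\<Union>w \<in> W. Unique w)"
    then have "card E \<le> card (\<Union>w \<in> W. Unique w)"
      using finW finE by (intro card_mono) (auto simp: Unique_def)
    then show False
      using fewer by linarith
  qed
  then obtain e where "e \<in> E" "\<forall>w \<in> W. e \<notin> Unique w"
    by blast
  then show ?thesis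
    by (intro bexI[of _ e]) (auto simp: Unique_def)
qed

lemma ex_subset_not_rainbow:
  fixes f :: "'w \<Rightarrow> 'a set \<Rightarrow> 'c"
  assumes finW: "finite W" and finH: "finite H"
    and colours: "\<forall>w \<in> W. card (f w ` {e. e \<subseteq> H \<and> card e = r}) \<le> k"
    and many: "card W * k < card H choose r"
    and s: "r + card W * r \<le> s" "s \<le> card H"
  shows "\<exists>B \<subseteq> H. card B = s \<and> (\<forall>w \<in> W. \<not> inj_on (f w) {e. e \<subseteq> B \<and> card e = r})"
proof -
  define E where "E = {e. e \<subseteq> H \<and> card e = r}"
  have "finite E" "card E = card H choose r"
    using finH by (simp_all add: E_def n_subsets)
  then obtain e where e: "e \<in> E" and "\<forall>w \<in> W. \<exists>e' \<in> E. e' \<noteq> e \<and> f w e' = f w e"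
    using ex_colour_repeated_for_all[OF finW _ colours[folded E_def]] many by auto
  then obtain twin where twin: "\<forall>w \<in> W. twin w \<in> E \<and> twin w \<noteq> e \<and> f w (twin w) = f w e"
    by metis
  define A where "A = e \<union> (\<Union>w \<in> W. twin w)"
  have "A \<subseteq> H"
    using e twin by (auto simp: A_def E_def)
  have "card A \<le> card e + (\<Sum>w \<in> W. card (twin w))"
    unfolding A_def using card_Un_le card_UN_le[OF finW] add_left_mono order_trans by metis
  also have "\<dots> = r + card W * r"
    using e twin by (simp add: E_def)
  finally obtain B where "A \<subseteq> B" "B \<subseteq> H" "card B = s"
    using exists_subset_between[OF _ s(2) \<open>A \<subseteq> H\<close> finH] s(1) by auto
  moreover have "\<not> inj_on (f w) {e. e \<subseteq> B \<and> card e = r}" if "w \<in> W" for w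
  proof
    assume inj: "inj_on (f w) {e. e \<subseteq> B \<and> card e = r}"
    have "e \<subseteq> B" "twin w \<subseteq> B"
      using \<open>A \<subseteq> B\<close> that by (auto simp: A_def)
    then show False
      using inj_onD[OF inj, of "twin w" e] twin e that by (auto simp: E_def)
  qed
  ultimately show ?thesis
    by blast
qed

lemma local_coloring_card_colours:
  assumes "clique_local_coloring n r p k f" and "v < n"
    and "X \<subseteq> {e. e \<subseteq> {..<n} \<and> card e = r}"
  shows "card (f v ` X) \<le> k"
proof -
  have "f v ` X \<subseteq> {1..k}"
    using assms unfolding clique_local_coloring_def by blast
  then show ?thesis
    using card_mono[OF finite_atLeastAtMost, of "f v ` X" 1 k] by simp
qed

lemma card_insert_insert_lessThan:
  assumes "2 \<le> r" and "r - 2 \<le> a" and "r - 2 \<le> b" and "a \<noteq> b"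
  shows "card (insert a (insert b {..<r - 2})) = r"
  using assms by auto

lemma local_coloring_link_pair:
  assumes col: "clique_local_coloring n r p k f" and r: "2 \<le> r" "r \<le> n" and m: "1 \<le> m"
    and big: "4 * k * m \<le> n - r + 1"
  obtains x y H where "x \<in> {r - 2..<n}" "y \<in> {r - 2..<n}" "x \<noteq> y"
    "H \<subseteq> {r - 2..<n} - {x, y}" "card H = m"
    "\<forall>u \<in> H. f u (insert u (insert x {..<r - 2})) = f u (insert u (insert y {..<r - 2}))"
proof -
  define L where "L = {r - 2..<n}"
  define g where "g u x = f u (insert u (insert x {..<r - 2}))" for u x
  have "card (g u ` (L - {u})) \<le> k" if "u \<in> L" for u
  proof -
    have "g u ` (L - {u}) = f u ` ((\<lambda>x. insert u (insert x {..<r - 2})) ` (L - {u}))"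
      by (simp add: g_def image_image)
    moreover have "(\<lambda>x. insert u (insert x {..<r - 2})) ` (L - {u}) \<subseteq> {e. e \<subseteq> {..<n} \<and> card e = r}"
    proof (rule image_subsetI)
      fix x
      assume "x \<in> L - {u}"
      then show "insert u (insert x {..<r - 2}) \<in> {e. e \<subseteq> {..<n} \<and> card e = r}"
        using that r card_insert_insert_lessThan[of r u x] by (auto simp: L_def)
    qed
    ultimately show ?thesis
      using local_coloring_card_colours[OF col] that by (simp add: L_def)
  qed
  moreover have "card L = n - r + 2"
    using r by (simp add: L_def)
  ultimately obtain x y where xy: "x \<in> L" "y \<in> L" "x \<noteq> y"
    and "m \<le> card {u \<in> L. u \<noteq> x \<and> u \<noteq> y \<and> g u x = g u y}"
    using ex_pair_many_equal_colours[of L m g k] r m big by (auto simp: L_def)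
  then obtain H where H: "H \<subseteq> {u \<in> L. u \<noteq> x \<and> u \<noteq> y \<and> g u x = g u y}" "card H = m"
    by (meson obtain_subset_with_card_n)
  show thesis
  proof (rule that[of x y H])
    show "H \<subseteq> {r - 2..<n} - {x, y}"
      using H by (auto simp: L_def)
    show "\<forall>u \<in> H. f u (insert u (insert x {..<r - 2})) = f u (insert u (insert y {..<r - 2}))"
      using H by (auto simp: g_def)
  qed (use xy H in \<open>auto simp: L_def\<close>)
qed

lemma not_inj_on_link_edges:
  assumes "2 \<le> r" and "r - 2 \<le> u" "r - 2 \<le> x" "r - 2 \<le> y" and "u \<noteq> x" "u \<noteq> y" "x \<noteq> y"
    and "insert u (insert x (insert y {..<r - 2})) \<subseteq> S"
    and "F (insert u (insert x {..<r - 2})) = F (insert u (insert y {..<r - 2}))"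
  shows "\<not> inj_on F {e. e \<subseteq> S \<and> card e = r}"
proof
  assume inj: "inj_on F {e. e \<subseteq> S \<and> card e = r}"
  have "insert u (insert x {..<r - 2}) \<in> {e. e \<subseteq> S \<and> card e = r}"
    "insert u (insert y {..<r - 2}) \<in> {e. e \<subseteq> S \<and> card e = r}"
    using assms card_insert_insert_lessThan[of r u x] card_insert_insert_lessThan[of r u y] by auto
  then have "insert u (insert x {..<r - 2}) = insert u (insert y {..<r - 2})"
    using inj_onD[OF inj] assms(9) by blast
  then show False
    using assms by auto
qed

lemma local_coloring_ex_blocking_set:
  assumes col: "clique_local_coloring n r p k f"
    and Core: "Core \<subseteq> {..<n}" "card Core = r" and H: "H \<subseteq> {..<n}" "card H = m"
    and p: "r * r + 2 * r \<le> p" "p \<le> m" and many: "r * k < m choose r"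
  obtains B where "B \<subseteq> H" "card B = p - r"
    "\<forall>w \<in> Core. \<not> inj_on (f w) {e. e \<subseteq> B \<and> card e = r}"
proof -
  have "finite Core" "finite H"
    using Core H p by (auto intro: finite_subset)
  have "{e. e \<subseteq> H \<and> card e = r} \<subseteq> {e. e \<subseteq> {..<n} \<and> card e = r}"
    using H by auto
  then have "\<forall>w \<in> Core. card (f w ` {e. e \<subseteq> H \<and> card e = r}) \<le> k"
    using local_coloring_card_colours[OF col] Core by blast
  moreover have "card Core * k < card H choose r" "r + card Core * r \<le> p - r" "p - r \<le> card H"
    using many Core H p by auto
  ultimately show thesis
    using ex_subset_not_rainbow[of Core H f r k "p - r"] \<open>finite Core\<close> \<open>finite H\<close> that by blast
qed

lemma local_coloring_binomial_bound:
  assumes col: "clique_local_coloring n r p k f" and r: "2 \<le> r" "r \<le> n"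
    and p: "r * r + 2 * r \<le> p" "p \<le> m" and big: "4 * k * m \<le> n - r + 1"
  shows "m choose r \<le> r * k"
proof (rule ccontr)
  assume many: "\<not> ?thesis"
  have "1 \<le> m"
    using p r by linarith
  then obtain x y H where x: "x \<in> {r - 2..<n}" and y: "y \<in> {r - 2..<n}" and "x \<noteq> y"
    and H: "H \<subseteq> {r - 2..<n} - {x, y}" "card H = m"
    and link: "\<forall>u \<in> H. f u (insert u (insert x {..<r - 2})) = f u (insert u (insert y {..<r - 2}))"
    using local_coloring_link_pair[OF col r _ big] by blast
  define Core where "Core = insert x (insert y {..<r - 2})"
  have card_Core: "card Core = r"
    using card_insert_insert_lessThan r x y \<open>x \<noteq> y\<close> by (simp add: Core_def)
  have "Core \<subseteq> {..<n}" "H \<subseteq> {..<n}" "r * k < m choose r"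
    using x y H many by (auto simp: Core_def)
  then obtain B where B: "B \<subseteq> H" "card B = p - r"
    and not_rainbow: "\<forall>w \<in> Core. \<not> inj_on (f w) {e. e \<subseteq> B \<and> card e = r}"
    using local_coloring_ex_blocking_set[OF col _ card_Core _ H(2) p] by blast
  define S where "S = Core \<union> B"
  have "Core \<inter> B = {}"
    using B H by (auto simp: Core_def)
  moreover have "finite B"
    using B(2) p r by (intro card_ge_0_finite) auto
  ultimately have "card S = p"
    using card_Un_disjoint[of Core B] card_Core B(2) p by (simp add: S_def Core_def)
  moreover have "S \<subseteq> {..<n}"
    using B H x y r by (auto simp: S_def Core_def)
  ultimately obtain u where "u \<in> S" and rainbow: "inj_on (f u) {e. e \<subseteq> S \<and> card e = r}"
    using col unfolding clique_local_coloring_def by blast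
  show False
  proof (cases "u \<in> Core")
    case True
    then show False
      using not_rainbow inj_on_subset[OF rainbow, of "{e. e \<subseteq> B \<and> card e = r}"]
      by (auto simp: S_def)
  next
    case False
    then have "u \<in> H"
      using \<open>u \<in> S\<close> B by (auto simp: S_def)
    then have "r - 2 \<le> u" "u \<noteq> x" "u \<noteq> y"
      using H by auto
    moreover have "insert u (insert x (insert y {..<r - 2})) \<subseteq> S"
      using \<open>u \<in> S\<close> by (auto simp: S_def Core_def)
    ultimately show False
      using not_inj_on_link_edges[OF r(1) _ _ _ _ _ \<open>x \<noteq> y\<close>, of u S "f u"] rainbow link \<open>u \<in> H\<close> x y
      by auto
  qed
qed

lemma clique_local_coloring_exists:
  assumes "0 < p"
  shows "\<exists>k f. clique_local_coloring n r p k f"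
proof -
  define Edges where "Edges = {e. e \<subseteq> {..<n} \<and> card e = r}"
  have "finite Edges"
    unfolding Edges_def by (rule finite_subset[of _ "Pow {..<n}"]) auto
  then obtain h where h: "bij_betw h Edges {0..<card Edges}"
    using ex_bij_betw_finite_nat by blast
  have "clique_local_coloring n r p (card Edges) (\<lambda>v e. h e + 1)"
    unfolding clique_local_coloring_def
  proof (intro conjI allI impI)
    fix v e
    assume "e \<subseteq> {..<n} \<and> card e = r"
    then have "h e \<in> {0..<card Edges}"
      using bij_betwE[OF h] by (simp add: Edges_def)
    then show "h e + 1 \<in> {1..card Edges}"
      by simp
  next
    fix S
    assume S: "S \<subseteq> {..<n} \<and> card S = p"
    then obtain u where "u \<in> S"
      using assms by fastforce
    moreover have "{e. e \<subseteq> S \<and> card e = r} \<subseteq> Edges"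
      using S by (auto simp: Edges_def)
    then have "inj_on h {e. e \<subseteq> S \<and> card e = r}"
      using bij_betw_imp_inj_on[OF h] inj_on_subset by blast
    ultimately show "\<exists>u \<in> S. inj_on (\<lambda>e. h e + 1) {e. e \<subseteq> S \<and> card e = r}"
      by (auto simp: inj_on_def)
  qed
  then show ?thesis
    by blast
qed

lemma C_clique_local_coloring:
  assumes "0 < p"
  shows "\<exists>f. clique_local_coloring n r p (C_clique r n p) f"
  unfolding C_clique_def using clique_local_coloring_exists[OF assms] by (rule LeastI_ex)

lemma power_div_le_of_binomial_le:
  fixes t :: real
  assumes "m choose r \<le> r * k" and "0 < t" "t \<le> real m" and "1 \<le> r" "r \<le> m"
  shows "t ^ r / real r ^ (r + 1) \<le> real k"
proof -
  have "t ^ r / real r ^ (r + 1) = (t / real r) ^ r / real r"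
    by (simp add: power_divide)
  also have "\<dots> \<le> (real m / real r) ^ r / real r"
    using assms by (intro divide_right_mono power_mono) auto
  also have "\<dots> \<le> real (m choose r) / real r"
    using binomial_ge_n_over_k_pow_k[of r m] assms by (intro divide_right_mono) auto
  also have "\<dots> \<le> real k"
    using assms by (simp add: divide_le_eq mult.commute flip: of_nat_mult)
  finally show ?thesis .
qed

lemma local_coloring_colours_ge:
  fixes t :: real
  assumes col: "clique_local_coloring n r p k f" and r: "2 \<le> r" "2 * r \<le> n"
    and p: "r * r + 2 * r \<le> p" "real p \<le> t" and t: "t ^ (r + 1) = real n"
    and m: "t \<le> real m" "real m \<le> 2 * t"
  shows "t ^ r / (16 * real r ^ (r + 1)) \<le> real k"
proof -
  have "0 < t" "p \<le> m"
    using p r m by linarith+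
  have R: "1 \<le> real r ^ (r + 1)"
    using r by (intro one_le_power) simp
  show ?thesis
  proof (cases "4 * k * m \<le> n - r + 1")
    case True
    then have "m choose r \<le> r * k"
      using local_coloring_binomial_bound[OF col r(1) _ p(1) \<open>p \<le> m\<close>] r by simp
    then have "t ^ r / real r ^ (r + 1) \<le> real k"
      using power_div_le_of_binomial_le \<open>0 < t\<close> m \<open>p \<le> m\<close> p r by fastforce
    moreover have "t ^ r / (16 * real r ^ (r + 1)) \<le> t ^ r / real r ^ (r + 1)"
      using \<open>0 < t\<close> R by (intro divide_left_mono) auto
    ultimately show ?thesis
      by linarith
  next
    case False
    then have "real (n - r + 1) < real (4 * k * m)"
      by (simp only: of_nat_less_iff not_le)
    moreover have "real n / 2 \<le> real (n - r + 1)"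
      using r by (simp add: of_nat_diff)
    moreover have "real (4 * k * m) \<le> 4 * real k * (2 * t)"
      using mult_left_mono[OF m(2), of "4 * real k"] by simp
    moreover have "t ^ r * t = real n"
      using t by (simp add: mult.commute)
    ultimately have "t ^ r * t < 16 * real k * t"
      by linarith
    then have "t ^ r < 16 * real k"
      using \<open>0 < t\<close> by simp
    moreover have "t ^ r / (16 * real r ^ (r + 1)) \<le> t ^ r / 16"
      using \<open>0 < t\<close> R by (intro divide_left_mono) auto
    ultimately show ?thesis
      by linarith
  qed
qed

lemma C_clique_lower_bound:
  assumes r: "2 \<le> r" and p: "r * r + 2 * r \<le> p" and n: "p ^ (r + 1) \<le> n" "2 * r \<le> n"
  shows "real n powr (real r / real (r + 1)) / (16 * real r ^ (r + 1)) \<le> real (C_clique r n p)"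
proof -
  obtain f where col: "clique_local_coloring n r p (C_clique r n p) f"
    using C_clique_local_coloring[of p n r] p r by auto
  define t where "t = real n powr (1 / real (r + 1))"
  have "0 < real n"
    using n r by simp
  have t_pow: "t ^ j = real n powr (real j / real (r + 1))" for j
    using \<open>0 < real n\<close> by (simp add: t_def powr_realpow[symmetric] powr_powr)
  have t: "t ^ (r + 1) = real n"
    using t_pow[of "r + 1"] \<open>0 < real n\<close> by simp
  have "real p ^ Suc r \<le> t ^ Suc r"
    using n(1) t by (metis Suc_eq_plus1 of_nat_le_iff of_nat_power)
  then have "real p \<le> t"
    by (rule power_le_imp_le_base) (simp add: t_def)
  moreover have "t \<le> real (nat \<lceil>t\<rceil>)" "real (nat \<lceil>t\<rceil>) \<le> 2 * t"
    using \<open>real p \<le> t\<close> p r by linarith+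
  ultimately have "t ^ r / (16 * real r ^ (r + 1)) \<le> real (C_clique r n p)"
    by (rule local_coloring_colours_ge[OF col r(1) n(2) p _ t])
  then show ?thesis
    using t_pow[of r] by simp
qed

theorem theorem3:
  fixes r p :: nat
  assumes "r \<ge> 2" and "p \<ge> (2*r - 1) * r + 2 * (r - 1)"
  shows "\<exists>c>0. \<exists>N. \<forall>n\<ge>N.
           real (C_clique r n p) \<ge> c * real n powr (real r / real (r + 1))"
proof -
  \<comment> \<open>The argument only needs the weaker hypothesis \<open>p \<ge> r\<^sup>2 + 2r\<close>.\<close>
  obtain s where "r = s + 2"
    using assms(1) le_Suc_ex by (metis add.commute)
  then have p: "r * r + 2 * r \<le> p"
    using assms(2) by (simp add: algebra_simps)
  show ?thesis
  proof (intro exI conjI allI impI)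
    show "0 < 1 / (16 * real r ^ (r + 1))"
      using assms(1) by simp
    fix n
    assume "max (p ^ (r + 1)) (2 * r) \<le> n"
    then show "1 / (16 * real r ^ (r + 1)) * real n powr (real r / real (r + 1)) \<le> real (C_clique r n p)"
      using C_clique_lower_bound[OF assms(1) p] by simp
  qed
qed

end
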